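(* Let $m>n>0$ be relatively prime integers with $(m,n)\neq(2,1)$, and $(r,s)\in\mathbb{Z}^2$. Then $(r,s)=\beta(m,n)$ if and only if $(r+s,\,-s)=\beta(m,\,m-n)$.
   Context: For relatively prime integers $a>b>0$, $\beta(a,b)$ denotes the Bézout coefficients given by the Euclidean algorithm: with $a=q_1b+r_1$, $b=q_2r_1+r_2$, $\dots$, $r_{k-2}=q_kr_{k-1}+r_k$, $r_{k-1}=1$, $r_k=0$ ($r_{-1}=a$, $r_0=b$), write $\begin{pmatrix}a\\ b\end{pmatrix}=M\begin{pmatrix}1\\0\end{pmatrix}$ with $M=\prod_{i=1}^k\begin{pmatrix}q_i&1\\1&0\end{pmatrix}$; then $\beta(a,b)$ is the first row of $M^{-1}$, and $\beta(a,b)=(r,s)$ satisfies $ra+sb=1$. *)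

theory Defs
  imports "HOL-Analysis.Analysis"
begin

function euclid_quots :: "int \<Rightarrow> int \<Rightarrow> int list" where
  "euclid_quots a b = (if b \<le> 0 then [] else (a div b) # euclid_quots b (a mod b))"
  by auto
termination
  by (relation "Wellfounded.measure (\<lambda>(a, b). nat b)") (auto simp: pos_mod_bound)

definition qmat :: "int \<Rightarrow> int^2^2" where
  "qmat q = (\<chi> i j. if i = 1 \<and> j = 1 then q else if i = 2 \<and> j = 2 then 0 else 1)"

definition euclid_matrix :: "int \<Rightarrow> int \<Rightarrow> int^2^2" where
  "euclid_matrix a b = foldr (\<lambda>q A. qmat q ** A) (euclid_quots a b) (mat 1)"

definition beta :: "int \<Rightarrow> int \<Rightarrow> int \<times> int" where
  "beta a b = (let Mi = matrix_inv (euclid_matrix a b) in (Mi $ 1 $ 1, Mi $ 1 $ 2))"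

end

theory Submission
  imports Defs
begin

text \<open>If \<open>2 n < m\<close>, the Euclidean algorithm on \<open>(m, m - n)\<close> starts with
  \<open>m = 1 (m - n) + n\<close> and \<open>m - n = (q\<^sub>1 - 1) n + r\<^sub>1\<close> and then runs exactly as on \<open>(m, n)\<close>.
  Since \<open>(1 1; 1 0) (q - 1 1; 1 0) = E (q 1; 1 0)\<close> for the involution \<open>E = (1 0; 1 -1)\<close>,
  the matrix of \<open>(m, m - n)\<close> is \<open>E M\<close>, whose inverse \<open>M\<^sup>-\<^sup>1 E\<close> has first row \<open>(r + s, -s)\<close>
  when \<open>(r, s)\<close> is the first row of \<open>M\<^sup>-\<^sup>1\<close>. If \<open>2 n > m\<close>, apply this to \<open>m - n\<close> in place
  of \<open>n\<close> and use \<open>E\<^sup>2 = 1\<close>; coprimality excludes \<open>2 n = m\<close> except for \<open>(2, 1)\<close>.\<close>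

lemma matrix_inv_eq:
  fixes A :: "'a::semiring_1^'n^'m"
  assumes "A ** B = mat 1" and "B ** A = mat 1"
  shows "matrix_inv A = B"
proof -
  let ?C = "matrix_inv A"
  have C: "A ** ?C = mat 1 \<and> ?C ** A = mat 1"
    unfolding matrix_inv_def by (rule someI[of _ B]) (use assms in blast)
  have "?C = ?C ** (A ** B)" using assms by simp
  also have "\<dots> = (?C ** A) ** B" by (simp add: matrix_mul_assoc)
  finally show ?thesis using C by simp
qed

lemma matrix_inv_mult:
  fixes A B :: "'a::semiring_1^'n^'n"
  assumes "invertible A" and "invertible B"
  shows "matrix_inv (A ** B) = matrix_inv B ** matrix_inv A"
proof -
  obtain A' where A': "A ** A' = mat 1" "A' ** A = mat 1"
    using assms(1) unfolding invertible_def by blast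
  obtain B' where B': "B ** B' = mat 1" "B' ** B = mat 1"
    using assms(2) unfolding invertible_def by blast
  have "(A ** B) ** (B' ** A') = mat 1" "(B' ** A') ** (A ** B) = mat 1"
    by (metis A' B' matrix_mul_assoc matrix_mul_rid)+
  then show ?thesis
    using A' B' by (simp add: matrix_inv_eq)
qed

definition complement_mat :: "int^2^2" where
  "complement_mat = (\<chi> i j. if i = 1 then (if j = 1 then 1 else 0) else (if j = 1 then 1 else -1))"

lemma complement_mat_involution: "complement_mat ** complement_mat = mat 1"
  by (auto simp: vec_eq_iff forall_2 sum_2 matrix_matrix_mult_def complement_mat_def mat_def)

lemma matrix_inv_complement_mat: "matrix_inv complement_mat = complement_mat"
  by (rule matrix_inv_eq) (fact complement_mat_involution)+

lemma invertible_complement_mat: "invertible complement_mat"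
  using complement_mat_involution unfolding invertible_def by blast

lemma qmat_one_mult_qmat: "qmat 1 ** qmat (q - 1) = complement_mat ** qmat q"
  by (auto simp: vec_eq_iff forall_2 sum_2 matrix_matrix_mult_def complement_mat_def qmat_def)

lemma invertible_qmat: "invertible (qmat q)"
proof -
  define Q :: "int^2^2" where
    "Q = (\<chi> i j. if i = 1 \<and> j = 1 then 0 else if i = 2 \<and> j = 2 then -q else 1)"
  have "qmat q ** Q = mat 1" "Q ** qmat q = mat 1"
    by (auto simp: vec_eq_iff forall_2 sum_2 matrix_matrix_mult_def qmat_def Q_def mat_def)
  then show ?thesis unfolding invertible_def by blast
qed

lemma invertible_euclid_matrix: "invertible (euclid_matrix a b)"
proof -
  have "invertible (foldr (\<lambda>q A. qmat q ** A) qs (mat 1))" for qs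
    by (induction qs) (auto intro!: invertible_mult invertible_qmat simp: invertible_def[of "mat 1"])
  then show ?thesis unfolding euclid_matrix_def .
qed

lemma euclid_quots_pos: "b > 0 \<Longrightarrow> euclid_quots a b = a div b # euclid_quots b (a mod b)"
  by (subst euclid_quots.simps) simp

lemma euclid_quots_complement:
  fixes m n :: int
  assumes "0 < n" and "2 * n < m"
  shows "euclid_quots m (m - n) = 1 # (m div n - 1) # euclid_quots n (m mod n)"
proof -
  have "m div (m - n) = 1" "m mod (m - n) = n"
    using assms div_pos_pos_trivial[of n "m - n"] mod_pos_pos_trivial[of n "m - n"]
    by (simp_all add: div_add_self2[of "m - n" n, simplified] mod_add_self2[of n "m - n", simplified])
  moreover have "(m - n) div n = m div n - 1"
    using assms div_add_self2[of n "m - n"] by simp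
  moreover have "(m - n) mod n = m mod n"
    by (simp add: mod_diff_right_eq[symmetric])
  ultimately show ?thesis
    using assms by (simp add: euclid_quots_pos)
qed

lemma euclid_matrix_complement:
  fixes m n :: int
  assumes "0 < n" and "2 * n < m"
  shows "euclid_matrix m (m - n) = complement_mat ** euclid_matrix m n"
proof -
  let ?R = "foldr (\<lambda>q A. qmat q ** A) (euclid_quots n (m mod n)) (mat 1)"
  have "euclid_matrix m (m - n) = qmat 1 ** (qmat (m div n - 1) ** ?R)"
    using euclid_quots_complement[OF assms] by (simp add: euclid_matrix_def)
  also have "\<dots> = complement_mat ** (qmat (m div n) ** ?R)"
    by (simp add: matrix_mul_assoc qmat_one_mult_qmat)
  also have "qmat (m div n) ** ?R = euclid_matrix m n"
    using assms by (simp add: euclid_matrix_def euclid_quots_pos)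
  finally show ?thesis .
qed

lemma beta_complement:
  fixes m n :: int
  assumes "0 < n" and "2 * n < m"
  shows "beta m (m - n) = (fst (beta m n) + snd (beta m n), - snd (beta m n))"
proof -
  have "matrix_inv (euclid_matrix m (m - n)) = matrix_inv (euclid_matrix m n) ** complement_mat"
    using euclid_matrix_complement[OF assms]
    by (simp add: matrix_inv_mult invertible_complement_mat invertible_euclid_matrix
        matrix_inv_complement_mat)
  then show ?thesis
    by (simp add: beta_def Let_def matrix_matrix_mult_def sum_2 complement_mat_def)
qed

theorem lemma2p5:
  fixes m n r s :: int
  assumes "m > n" and "n > 0" and "coprime m n" and "(m, n) \<noteq> (2, 1)"
  shows "(r, s) = beta m n \<longleftrightarrow> (r + s, - s) = beta m (m - n)"
proof -
  have "2 * n \<noteq> m"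
  proof
    assume "2 * n = m"
    then have "n dvd m" by auto
    then have "is_unit n"
      using assms(3) by (meson coprime_absorb_left coprime_commute)
    with assms(2) have "n = 1" by auto
    with \<open>2 * n = m\<close> assms(4) show False by simp
  qed
  then consider "2 * n < m" | "2 * (m - n) < m" by (cases "2 * n < m") auto
  then show ?thesis
  proof cases
    case 1
    then show ?thesis using beta_complement[OF assms(2)] by (cases "beta m n") auto
  next
    case 2
    then show ?thesis using beta_complement[of "m - n" m] assms(1)
      by (cases "beta m (m - n)") auto
  qed
qed

end
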